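(* For any positive integers $k$ and $M$ such that $k$ is a power of $2$, there exist a set $X$, $k$ families $F_1,\dots,F_k$ of functions with domain $X$ and codomain $\{0,1\}$, and a function $g:\{0,1\}^k\to\{0,1\}$ such that $\mathrm{opt}_{\mathrm{std}}(F_i)\le M$ for all $i\in\{1,\dots,k\}$ and \[\mathrm{opt}_{\mathrm{std}}(\mathrm{COMPOSE}(F_1,\dots,F_k,g))\ge\tfrac12 kM\log_2(k).\]
   Context: For a family $F$ of functions from a set $X$ to a set $Y$, $\mathrm{opt}_{\mathrm{std}}(F)$ is the worst-case number of mistakes in the standard online learning model under optimal play: an adversary secretly fixes $f\in F$ and presents inputs $x_1,x_2,\dots\in X$ adaptively; after each input the learner guesses $f(x_t)$ and the adversary then reveals $f(x_t)$; a mistake is an incorrect guess; the learner minimizes and the adversary maximizes the number of mistakes. $\mathrm{COMPOSE}(F_1,\dots,F_k,g)$ is the family of all functions $x\mapsto g(f_1(x),\dots,f_k(x))$ on $X$ with $f_i\in F_i$ for each $i$. *)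

theory Defs
  imports Complex_Main "HOL-Library.Extended_Real"
begin

text \<open>Standard online learning game on domain X for a family F of functions X -> Y.
  forces X F n: the adversary (who must keep the revealed labels consistent with some
  member of F, i.e. with the secretly fixed target) can force at least n mistakes
  against every learner. A round: adversary picks x in X, learner guesses yh,
  adversary reveals y (consistent with F); a mistake occurs iff y differs from yh.\<close>

inductive forces :: "'x set \<Rightarrow> ('x \<Rightarrow> 'y) set \<Rightarrow> nat \<Rightarrow> bool" where
  zero: "F \<noteq> {} \<Longrightarrow> forces X F 0"
| round: "x \<in> X \<Longrightarrow>
     (\<forall>yh. \<exists>y. (y \<noteq> yh \<and> forces X {f \<in> F. f x = y} n)
               \<or> (y = yh \<and> forces X {f \<in> F. f x = y} (Suc n)))
     \<Longrightarrow> forces X F (Suc n)"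

definition opt_std :: "'x set \<Rightarrow> ('x \<Rightarrow> 'y) set \<Rightarrow> enat" where
  "opt_std X F = Sup {enat n | n. forces X F n}"

definition COMPOSE :: "nat \<Rightarrow> (nat \<Rightarrow> ('x \<Rightarrow> 'y) set) \<Rightarrow> ('y list \<Rightarrow> 'z) \<Rightarrow> ('x \<Rightarrow> 'z) set" where
  "COMPOSE k F g = {(\<lambda>x. g (map (\<lambda>i. f i x) [0..<k])) | f. \<forall>i<k. f i \<in> F i}"

end

theory Submission
  imports Defs "HOL-Library.Countable"
begin

(* Points of X encode pairs (S, c) of a finite index set S and a label c. The i-th base family
   consists of the tests [i \<in> S \<and> c \<in> C] with |C| \<le> M, and g is disjunction. A learner for
   one base family predicts with the positive labels seen so far and errs only on a new element
   of C, hence at most M times.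
   Against the disjunction, the adversary keeps a budget of r i further elements of each C i, all
   above a fresh threshold N, and asks (A, N) where A is the set of coordinates with budget left.
   A guess True is refuted by raising N; a guess False is refuted by putting N into some C i, and
   binary search for that i among the more than k/2 = 2^(j-1) candidates in A, with queries (S, N)
   for S \<subseteq> A, forces j - 1 further mistakes. So as long as the total budget exceeds kM/2, each
   unit of it is worth j = log2 k mistakes, which gives kM/2 * log2 k in total. *)

lemma forces_nonempty: "forces X F n \<Longrightarrow> F \<noteq> {}"
  by (induction rule: forces.induct) auto

lemma forces_mono: "forces X F n \<Longrightarrow> F \<subseteq> G \<Longrightarrow> forces X G n"
proof (induction arbitrary: G rule: forces.induct)
  case (zero F X)
  then show ?case by (auto intro: forces.zero)
next
  case (round x X F n)
  show ?case
  proof (rule forces.round[OF round.hyps(1)], intro allI)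
    fix yh
    have "{f \<in> F. f x = y} \<subseteq> {f \<in> G. f x = y}" for y
      using round.prems by blast
    then show "\<exists>y. y \<noteq> yh \<and> forces X {f \<in> G. f x = y} n \<or>
                  y = yh \<and> forces X {f \<in> G. f x = y} (Suc n)"
      using round.IH by meson
  qed
qed

lemma forces_le: "forces X F n \<Longrightarrow> m \<le> n \<Longrightarrow> forces X F m"
proof (induction arbitrary: m rule: forces.induct)
  case (zero F X)
  then show ?case by (auto intro: forces.zero)
next
  case (round x X F n)
  show ?case
  proof (cases m)
    case 0
    have "F \<noteq> {}"
      using round.IH forces_nonempty by blast
    then show ?thesis
      using 0 by (simp add: forces.zero)
  next
    case (Suc m')
    have "m' \<le> n"
      using Suc round.prems by simp
    show ?thesis
      unfolding Suc
    proof (rule forces.round[OF round.hyps(1)], intro allI)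
      fix yh
      show "\<exists>y. y \<noteq> yh \<and> forces X {f \<in> F. f x = y} m' \<or>
                y = yh \<and> forces X {f \<in> F. f x = y} (Suc m')"
        using round.IH[rule_format, of yh] \<open>m' \<le> n\<close> by auto
    qed
  qed
qed

lemma forces_Suc_split:
  fixes F :: "('x \<Rightarrow> bool) set"
  assumes "x \<in> X" and "forces X {f \<in> F. f x} n" and "forces X {f \<in> F. \<not> f x} n"
  shows "forces X F (Suc n)"
proof (rule forces.round[OF assms(1)], intro allI)
  fix yh
  show "\<exists>y. y \<noteq> yh \<and> forces X {f \<in> F. f x = y} n \<or> y = yh \<and> forces X {f \<in> F. f x = y} (Suc n)"
    using assms(2,3) by (intro exI[of _ "\<not> yh"]) (cases yh, simp_all)
qed

lemma enat_le_opt_std: "forces X F n \<Longrightarrow> enat n \<le> opt_std X F"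
  unfolding opt_std_def by (rule Sup_upper) blast

lemma opt_std_le: "(\<And>n. forces X F n \<Longrightarrow> n \<le> m) \<Longrightarrow> opt_std X F \<le> enat m"
  unfolding opt_std_def by (rule Sup_least) auto

(* Binary search: each query splits the candidate index set A into halves. *)
lemma forces_UN_shattered:
  assumes "finite A" and "2 ^ d \<le> card A" and "\<And>i. i \<in> A \<Longrightarrow> forces X (H i) m"
    and "\<And>S. S \<subseteq> A \<Longrightarrow> \<exists>x\<in>X. \<forall>i\<in>A. \<forall>f\<in>H i. f x = (i \<in> S)"
  shows "forces X (\<Union>i\<in>A. H i) (m + d)"
  using assms
proof (induction d arbitrary: A)
  case 0
  then obtain i where "i \<in> A"
    by fastforce
  then show ?case
    using 0 forces_mono[of X "H i" m "\<Union>i\<in>A. H i"] by auto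
next
  case (Suc d)
  have half: "forces X (\<Union>i\<in>B. H i) (m + d)" if "B \<subseteq> A" "2 ^ d \<le> card B" for B
  proof (rule Suc.IH)
    show "finite B"
      using \<open>B \<subseteq> A\<close> \<open>finite A\<close> finite_subset by blast
    show "\<exists>x\<in>X. \<forall>i\<in>B. \<forall>f\<in>H i. f x = (i \<in> S)" if "S \<subseteq> B" for S
      using Suc.prems(4)[of S] \<open>B \<subseteq> A\<close> \<open>S \<subseteq> B\<close> by (meson subset_trans subsetD)
  qed (use that Suc.prems(3) in auto)
  obtain S where S: "S \<subseteq> A" "card S = 2 ^ d"
    using obtain_subset_with_card_n[of "2 ^ d" A] Suc.prems(2) by auto
  have "2 ^ d \<le> card (A - S)"
    using S Suc.prems(1,2) by (simp add: card_Diff_subset finite_subset)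
  then have in_S: "forces X (\<Union>i\<in>S. H i) (m + d)" and out_S: "forces X (\<Union>i\<in>A - S. H i) (m + d)"
    using half S by auto
  obtain x where x: "x \<in> X" "\<forall>i\<in>A. \<forall>f\<in>H i. f x = (i \<in> S)"
    using Suc.prems(4) S(1) by blast
  have "(\<Union>i\<in>S. H i) \<subseteq> {f \<in> (\<Union>i\<in>A. H i). f x}"
    and "(\<Union>i\<in>A - S. H i) \<subseteq> {f \<in> (\<Union>i\<in>A. H i). \<not> f x}"
    using x S by auto
  then show ?case
    unfolding add_Suc_right using forces_mono in_S out_S by (intro forces_Suc_split[OF x(1)])
qed

definition membership_family :: "('x \<Rightarrow> bool) \<Rightarrow> ('x \<Rightarrow> 'c) \<Rightarrow> 'c set \<Rightarrow> nat \<Rightarrow> ('x \<Rightarrow> bool) set" where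
  "membership_family p \<sigma> K m = {\<lambda>x. p x \<and> \<sigma> x \<in> C | C. K \<subseteq> C \<and> finite C \<and> card (C - K) \<le> m}"

lemma membership_family_known:
  "f \<in> membership_family p \<sigma> K m \<Longrightarrow> \<sigma> x \<in> K \<Longrightarrow> f x = p x"
  unfolding membership_family_def by auto

lemma membership_family_new:
  assumes "f \<in> membership_family p \<sigma> K m" and "f x" and "\<sigma> x \<notin> K"
  shows "0 < m" and "f \<in> membership_family p \<sigma> (insert (\<sigma> x) K) (m - 1)"
proof -
  obtain C where C: "f = (\<lambda>x. p x \<and> \<sigma> x \<in> C)" "K \<subseteq> C" "finite C" "card (C - K) \<le> m"
    using assms(1) unfolding membership_family_def by blast
  have c: "\<sigma> x \<in> C - K"
    using C(1) assms(2,3) by simp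
  then have "card (C - K) = Suc (card (C - insert (\<sigma> x) K))"
    using C(3) by (metis Diff_insert card_Suc_Diff1 finite_Diff)
  then show "0 < m" and "f \<in> membership_family p \<sigma> (insert (\<sigma> x) K) (m - 1)"
    using C c unfolding membership_family_def by auto
qed

lemma forces_membership_family_bound:
  "forces X G n \<Longrightarrow> G \<subseteq> membership_family p \<sigma> K m \<Longrightarrow> n \<le> m"
proof (induction arbitrary: K m rule: forces.induct)
  case (zero F X)
  then show ?case by simp
next
  case (round x X G n)
  define R where "R y = {f \<in> G. f x = y}" for y
  have R_sub: "R y \<subseteq> membership_family p \<sigma> K m" for y
    using round.prems unfolding R_def by blast
  obtain y where
    "y \<noteq> (p x \<and> \<sigma> x \<in> K) \<and> forces X (R y) n \<and> (\<forall>K m. R y \<subseteq> membership_family p \<sigma> K m \<longrightarrow> n \<le> m) \<or>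
     y = (p x \<and> \<sigma> x \<in> K) \<and> (\<forall>K m. R y \<subseteq> membership_family p \<sigma> K m \<longrightarrow> Suc n \<le> m)"
    using round.IH[rule_format, of "p x \<and> \<sigma> x \<in> K"] unfolding R_def by blast
  then consider (correct) "Suc n \<le> m"
    | (mistake) "y \<noteq> (p x \<and> \<sigma> x \<in> K)" "forces X (R y) n"
        "\<And>K m. R y \<subseteq> membership_family p \<sigma> K m \<Longrightarrow> n \<le> m"
    using R_sub by blast
  then show ?case
  proof cases
    case mistake
    obtain f where "f \<in> R y"
      using forces_nonempty mistake(2) by blast
    then have f: "f \<in> membership_family p \<sigma> K m" "f x = y"
      using R_sub unfolding R_def by auto
    then have new: "\<sigma> x \<notin> K" and "y"
      using membership_family_known[OF f(1)] mistake(1) by auto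
    have "0 < m"
      using membership_family_new(1)[OF f(1)] f(2) \<open>y\<close> new by blast
    have "R y \<subseteq> membership_family p \<sigma> (insert (\<sigma> x) K) (m - 1)"
    proof
      fix g
      assume "g \<in> R y"
      then have "g \<in> membership_family p \<sigma> K m" "g x"
        using R_sub \<open>y\<close> unfolding R_def by auto
      then show "g \<in> membership_family p \<sigma> (insert (\<sigma> x) K) (m - 1)"
        using new by (rule membership_family_new(2))
    qed
    then show ?thesis
      using mistake(3) \<open>0 < m\<close> by fastforce
  qed
qed

lemma less_card_nonzero_if_sum_greater:
  fixes f :: "'a \<Rightarrow> nat"
  assumes "finite A" and "\<And>i. i \<in> A \<Longrightarrow> f i \<le> M" and "c * M < sum f A"
  shows "c < card {i \<in> A. 0 < f i}"
proof -
  have "sum f A = sum f {i \<in> A. 0 < f i}"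
    using assms(1) by (intro sum.mono_neutral_right) auto
  also have "\<dots> \<le> card {i \<in> A. 0 < f i} * M"
    using assms(2) sum_bounded_above[of "{i \<in> A. 0 < f i}" f M] by auto
  finally show ?thesis
    using assms(3) by (metis less_le_trans mult_less_cancel2)
qed

lemma sum_fun_upd_decrement:
  fixes r :: "'a \<Rightarrow> nat"
  assumes "finite A" and "i \<in> A" and "0 < r i"
  shows "Suc (\<Sum>l\<in>A. (r(i := r i - 1)) l) = (\<Sum>l\<in>A. r l)"
proof -
  have "(\<Sum>l\<in>A - {i}. (r(i := r i - 1)) l) = (\<Sum>l\<in>A - {i}. r l)"
    by (intro sum.cong) auto
  then show ?thesis
    using assms by (simp add: sum.remove)
qed

lemma potential_fun_upd_decrement:
  fixes r :: "nat \<Rightarrow> nat"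
  assumes "i < k" and "0 < r i" and "h < (\<Sum>l<k. r l)" and "n \<le> j * ((\<Sum>l<k. r l) - h)"
  shows "n - j \<le> j * ((\<Sum>l<k. (r(i := r i - 1)) l) - h)"
proof -
  have "Suc (\<Sum>l<k. (r(i := r i - 1)) l) = (\<Sum>l<k. r l)"
    using assms(1,2) by (intro sum_fun_upd_decrement) auto
  then have "(\<Sum>l<k. r l) - h = Suc ((\<Sum>l<k. (r(i := r i - 1)) l) - h)"
    using assms(3) by linarith
  then show ?thesis
    using assms(4) by (simp del: fun_upd_apply)
qed

definition query :: "nat set \<Rightarrow> nat \<Rightarrow> nat" where
  "query S c = to_nat (sorted_list_of_set S, c)"

definition query_set :: "nat \<Rightarrow> nat set" where
  "query_set x = set (fst (from_nat x :: nat list \<times> nat))"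

definition query_point :: "nat \<Rightarrow> nat" where
  "query_point x = snd (from_nat x :: nat list \<times> nat)"

lemma query_set_query [simp]: "finite S \<Longrightarrow> query_set (query S c) = S"
  unfolding query_def query_set_def by simp

lemma query_point_query [simp]: "query_point (query S c) = c"
  unfolding query_def query_point_def by simp

definition coord_test :: "nat \<Rightarrow> nat set \<Rightarrow> nat \<Rightarrow> bool" where
  "coord_test i C x = (i \<in> query_set x \<and> query_point x \<in> C)"

definition coord_family :: "nat \<Rightarrow> nat \<Rightarrow> (nat \<Rightarrow> bool) set" where
  "coord_family M i = {coord_test i C | C. finite C \<and> card C \<le> M}"

lemma opt_std_coord_family: "opt_std X (coord_family M i) \<le> enat M"
proof (rule opt_std_le)
  have "coord_family M i \<subseteq> membership_family (\<lambda>x. i \<in> query_set x) query_point {} M"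
    unfolding coord_family_def membership_family_def coord_test_def by auto
  then show "forces X (coord_family M i) n \<Longrightarrow> n \<le> M" for n
    using forces_membership_family_bound forces_mono by blast
qed

definition union_test :: "nat \<Rightarrow> (nat \<Rightarrow> nat set) \<Rightarrow> nat \<Rightarrow> bool" where
  "union_test k E x = (\<exists>i<k. coord_test i (E i) x)"

lemma union_test_in_COMPOSE:
  assumes "\<And>i. i < k \<Longrightarrow> finite (E i) \<and> card (E i) \<le> M"
  shows "union_test k E \<in> COMPOSE k (coord_family M) (list_ex id)"
proof -
  have "union_test k E = (\<lambda>x. list_ex id (map (\<lambda>i. coord_test i (E i) x) [0..<k]))"
    unfolding union_test_def by (auto simp: fun_eq_iff list_ex_iff)
  moreover have "\<forall>i<k. coord_test i (E i) \<in> coord_family M i"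
    using assms unfolding coord_family_def by blast
  ultimately show ?thesis
    unfolding COMPOSE_def by (auto intro!: exI[of _ "\<lambda>i. coord_test i (E i)"])
qed

definition residual_family :: "nat \<Rightarrow> (nat \<Rightarrow> nat set) \<Rightarrow> (nat \<Rightarrow> nat) \<Rightarrow> nat \<Rightarrow> (nat \<Rightarrow> bool) set" where
  "residual_family k K r N =
     {union_test k (\<lambda>i. K i \<union> D i) | D. \<forall>i<k. finite (D i) \<and> D i \<subseteq> {N..} \<and> card (D i) \<le> r i}"

lemma residual_family_nonempty: "residual_family k K r N \<noteq> {}"
  unfolding residual_family_def by force

lemma residual_family_Suc_subset:
  assumes "\<forall>i<k. N \<notin> K i"
  shows "residual_family k K r (Suc N) \<subseteq> {f \<in> residual_family k K r N. \<not> f (query S N)}"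
  using assms unfolding residual_family_def union_test_def coord_test_def by fastforce

lemma residual_family_hit_subset:
  assumes "i < k" and "0 < r i" and "i \<in> S" and "finite S"
  shows "residual_family k (K(i := insert N (K i))) (r(i := r i - 1)) (Suc N)
           \<subseteq> {f \<in> residual_family k K r N. f (query S N)}"
proof
  fix f
  assume "f \<in> residual_family k (K(i := insert N (K i))) (r(i := r i - 1)) (Suc N)"
  then obtain D where f: "f = union_test k (\<lambda>l. (K(i := insert N (K i))) l \<union> D l)"
    and D: "\<forall>l<k. finite (D l) \<and> D l \<subseteq> {Suc N..} \<and> card (D l) \<le> (r(i := r i - 1)) l"
    unfolding residual_family_def by blast
  define D' where "D' = D(i := insert N (D i))"
  have "f = union_test k (\<lambda>l. K l \<union> D' l)"
    unfolding f D'_def by (auto simp: fun_eq_iff union_test_def)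
  moreover have "\<forall>l<k. finite (D' l) \<and> D' l \<subseteq> {N..} \<and> card (D' l) \<le> r l"
    using D assms(2) unfolding D'_def by (force simp: card_insert_if subset_iff)
  ultimately have "f \<in> residual_family k K r N"
    unfolding residual_family_def by blast
  moreover have "f (query S N)"
    using assms unfolding f union_test_def coord_test_def by auto
  ultimately show "f \<in> {f \<in> residual_family k K r N. f (query S N)}"
    by blast
qed

lemma residual_family_hit_query:
  assumes "\<forall>l<k. N \<notin> K l" and "i < k" and "finite S"
    and "f \<in> residual_family k (K(i := insert N (K i))) r (Suc N)"
  shows "f (query S N) = (i \<in> S)"
proof -
  obtain D where f: "f = union_test k (\<lambda>l. (K(i := insert N (K i))) l \<union> D l)"
    and D: "\<forall>l<k. D l \<subseteq> {Suc N..}"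
    using assms(4) unfolding residual_family_def by blast
  have "N \<in> (K(i := insert N (K i))) l \<union> D l \<longleftrightarrow> l = i" if "l < k" for l
    using assms(1) D that by (force simp: subset_iff)
  then show ?thesis
    using assms(2) unfolding f union_test_def coord_test_def query_set_query[OF assms(3)]
      query_point_query by blast
qed

lemma forces_residual_family_query_true:
  assumes "finite A" and "2 ^ d \<le> card A" and "\<forall>i\<in>A. i < k \<and> 0 < r i" and "\<forall>l<k. N \<notin> K l"
    and "\<And>i. i \<in> A \<Longrightarrow>
           forces UNIV (residual_family k (K(i := insert N (K i))) (r(i := r i - 1)) (Suc N)) m"
  shows "forces UNIV {f \<in> residual_family k K r N. f (query A N)} (m + d)"
proof -
  define H where "H i = residual_family k (K(i := insert N (K i))) (r(i := r i - 1)) (Suc N)" for i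
  have "forces UNIV (\<Union>i\<in>A. H i) (m + d)"
  proof (rule forces_UN_shattered[OF assms(1,2)])
    show "forces UNIV (H i) m" if "i \<in> A" for i
      using assms(5)[OF that] unfolding H_def .
    show "\<exists>x\<in>UNIV. \<forall>i\<in>A. \<forall>f\<in>H i. f x = (i \<in> S)" if "S \<subseteq> A" for S
      using residual_family_hit_query[OF assms(4)] assms(1,3) finite_subset[OF that]
      unfolding H_def by blast
  qed
  moreover have "(\<Union>i\<in>A. H i) \<subseteq> {f \<in> residual_family k K r N. f (query A N)}"
    using residual_family_hit_subset assms(1,3) unfolding H_def by blast
  ultimately show ?thesis
    by (rule forces_mono)
qed

lemma forces_residual_family:
  assumes "k = 2 ^ j" and "\<forall>i<k. K i \<subseteq> {..<N} \<and> r i \<le> M"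
    and "n \<le> j * ((\<Sum>i<k. r i) - k div 2 * M)"
  shows "forces UNIV (residual_family k K r N) n"
  using assms(2,3)
proof (induction n arbitrary: K r N rule: less_induct)
  case (less n)
  show ?case
  proof (cases n)
    case 0
    then show ?thesis
      using residual_family_nonempty forces.zero by blast
  next
    case (Suc n')
    define U where "U = (\<Sum>i<k. r i)"
    define A where "A = {i \<in> {..<k}. 0 < r i}"
    have n_le: "Suc n' \<le> j * (U - k div 2 * M)"
      using less.prems(2) Suc unfolding U_def by simp
    then have "0 < j * (U - k div 2 * M)"
      by linarith
    then have "0 < j" and "k div 2 * M < U"
      by simp_all
    have N_fresh: "\<forall>l<k. N \<notin> K l"
      using less.prems(1) by blast
    have "k div 2 < card A"
      using less.prems(1) \<open>k div 2 * M < U\<close> unfolding U_def A_def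
      by (intro less_card_nonzero_if_sum_greater) auto
    moreover have "k div 2 = 2 ^ (j - 1)"
      using assms(1) \<open>0 < j\<close> by (cases j) simp_all
    ultimately have card_A: "2 ^ (j - 1) \<le> card A"
      by simp
    have reveal_false: "forces UNIV {f \<in> residual_family k K r N. \<not> f (query A N)} n'"
    proof (rule forces_mono)
      show "forces UNIV (residual_family k K r (Suc N)) n'"
        using Suc less.prems by (intro less.IH) (auto simp: subset_iff less_Suc_eq)
      show "residual_family k K r (Suc N) \<subseteq> {f \<in> residual_family k K r N. \<not> f (query A N)}"
        using residual_family_Suc_subset[OF N_fresh] .
    qed
    have "forces UNIV {f \<in> residual_family k K r N. f (query A N)} (Suc n' - j + (j - 1))"
    proof (rule forces_residual_family_query_true[OF _ card_A _ N_fresh])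
      fix i
      assume "i \<in> A"
      then have "i < k" "0 < r i"
        unfolding A_def by auto
      then have "Suc n' - j \<le> j * ((\<Sum>l<k. (r(i := r i - 1)) l) - k div 2 * M)"
        using \<open>k div 2 * M < U\<close> n_le unfolding U_def by (rule potential_fun_upd_decrement)
      then show "forces UNIV (residual_family k (K(i := insert N (K i))) (r(i := r i - 1)) (Suc N))
                   (Suc n' - j)"
        using less.prems(1) \<open>0 < j\<close> Suc by (intro less.IH) (auto simp: subset_iff less_Suc_eq)
    qed (auto simp: A_def)
    then have reveal_true: "forces UNIV {f \<in> residual_family k K r N. f (query A N)} n'"
      by (rule forces_le) simp
    show ?thesis
      unfolding Suc using forces_Suc_split[OF UNIV_I reveal_true reveal_false] .
  qed
qed

lemma forces_COMPOSE_coord_family: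
  assumes "k = 2 ^ j"
  shows "forces UNIV (COMPOSE k (coord_family M) (list_ex id)) (j * (k div 2 * M))"
proof (rule forces_mono)
  have "forces UNIV (residual_family k (\<lambda>_. {}) (\<lambda>_. M) 0) (j * ((\<Sum>i<k. M) - k div 2 * M))"
    using assms by (intro forces_residual_family) auto
  moreover have "k div 2 * M \<le> (k - k div 2) * M"
    by (intro mult_le_mono1) presburger
  ultimately show "forces UNIV (residual_family k (\<lambda>_. {}) (\<lambda>_. M) 0) (j * (k div 2 * M))"
    by (elim forces_le) (simp add: diff_mult_distrib)
  show "residual_family k (\<lambda>_. {}) (\<lambda>_. M) 0 \<subseteq> COMPOSE k (coord_family M) (list_ex id)"
    unfolding residual_family_def by (auto intro!: union_test_in_COMPOSE)
qed

theorem mainTheorem14: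
  fixes k M :: nat
  assumes "k > 0" and "M > 0" and "\<exists>j. k = 2 ^ j"
  shows "\<exists>(X :: nat set) (F :: nat \<Rightarrow> (nat \<Rightarrow> bool) set) (g :: bool list \<Rightarrow> bool).
           (\<forall>i<k. opt_std X (F i) \<le> enat M) \<and>
           ereal_of_enat (opt_std X (COMPOSE k F g)) \<ge> ereal (1/2 * real k * real M * log 2 (real k))"
proof (intro exI conjI)
  obtain j where k: "k = 2 ^ j"
    using assms(3) by blast
  have "log 2 (real k) = j"
    using k by (simp add: log_nat_power)
  then have "1/2 * real k * real M * log 2 (real k) = real (j * (k div 2 * M))"
    using k by (cases j) (simp_all add: algebra_simps)
  also have "ereal \<dots> \<le> ereal_of_enat (opt_std UNIV (COMPOSE k (coord_family M) (list_ex id)))"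
    unfolding ereal_of_enat_simps(1)[symmetric] ereal_of_enat_le_iff
    by (rule enat_le_opt_std[OF forces_COMPOSE_coord_family[OF k]])
  finally show "ereal (1/2 * real k * real M * log 2 (real k))
                  \<le> ereal_of_enat (opt_std UNIV (COMPOSE k (coord_family M) (list_ex id)))" .
  show "\<forall>i<k. opt_std UNIV (coord_family M i) \<le> enat M"
    using opt_std_coord_family by blast
qed

end
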